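(* Let $\mathcal N=(\mathcal L,\mathcal I,D_{\mathcal L})$ be a network (with a general collision profile) of character $D^*$, and let $S$ be a framed schedule of frame length $T_F\ge 3D^*+1$. Then $S$ is collision free if and only if for every $k\ge0$, every link $l$ that is active in frame $k$, and every $\phi\in\mathcal I(l)$, some $l'\in\phi$ is inactive in frame $k$.
   Context: A network is a triple $\mathcal N=(\mathcal L,\mathcal I,D_{\mathcal L})$ where $\mathcal L$ is a finite nonempty set of links, each $\mathcal I(l)$ is a collection of nonempty subsets of $\mathcal L$, and $D_{\mathcal L}$ assigns an integer $D_{\mathcal L}(l,l')$ to every pair with $l'\in\phi$ for some $\phi\in\mathcal I(l)$. The character is $D^*=\max_{l}\max_{\phi\in\mathcal I(l)}\max_{l'\in\phi}|D_{\mathcal L}(l,l')|$ (0 if there are no collision sets). A schedule is a map $S:\mathcal L\times\mathbb Z\to\{0,1\}$; $S(l,t)$ has a collision if there is $\phi\in\mathcal I(l)$ with $S(l',t+D_{\mathcal L}(l,l'))=1$ for all $l'\in\phi$; $S$ is collision free if no $(l,t)$ with $S(l,t)=1$ has a collision. For an integer $T_F\ge D^*+1$, a framed schedule of frame length $T_F$ is a schedule $S$ with $S(l,t)=0$ for $t<0$, such that for every $k\ge0$ (frame $k$ consists of timeslots $kT_F,\dots,(k+1)T_F-1$) and every $l$: $S(l,kT_F+i)=0$ for $i=T_F-D^*,\dots,T_F-1$, and the values $S(l,kT_F+i)$, $i=0,\dots,T_F-D^*-1$, are all equal. Link $l$ is active in frame $k$ if these values equal 1, and inactive otherwise. *)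

theory Defs
  imports Main
begin

text \<open>A network: link set L (finite, nonempty), collision profile I, delays D.
  Schedules take values in {0,1}, represented as bool (True = 1).\<close>

definition network :: "'l set \<Rightarrow> ('l \<Rightarrow> 'l set set) \<Rightarrow> ('l \<Rightarrow> 'l \<Rightarrow> int) \<Rightarrow> bool" where
  "network L I D \<longleftrightarrow> finite L \<and> L \<noteq> {} \<and>
     (\<forall>l\<in>L. \<forall>\<phi>\<in>I l. \<phi> \<noteq> {} \<and> \<phi> \<subseteq> L)"

definition character :: "'l set \<Rightarrow> ('l \<Rightarrow> 'l set set) \<Rightarrow> ('l \<Rightarrow> 'l \<Rightarrow> int) \<Rightarrow> int" where
  "character L I D = Max (insert 0 {\<bar>D l l'\<bar> | l \<phi> l'. l \<in> L \<and> \<phi> \<in> I l \<and> l' \<in> \<phi>})"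

definition has_collision :: "('l \<Rightarrow> 'l set set) \<Rightarrow> ('l \<Rightarrow> 'l \<Rightarrow> int) \<Rightarrow> ('l \<Rightarrow> int \<Rightarrow> bool) \<Rightarrow> 'l \<Rightarrow> int \<Rightarrow> bool" where
  "has_collision I D S l t \<longleftrightarrow> (\<exists>\<phi>\<in>I l. \<forall>l'\<in>\<phi>. S l' (t + D l l'))"

definition collision_free :: "'l set \<Rightarrow> ('l \<Rightarrow> 'l set set) \<Rightarrow> ('l \<Rightarrow> 'l \<Rightarrow> int) \<Rightarrow> ('l \<Rightarrow> int \<Rightarrow> bool) \<Rightarrow> bool" where
  "collision_free L I D S \<longleftrightarrow> (\<forall>l\<in>L. \<forall>t. S l t \<longrightarrow> \<not> has_collision I D S l t)"

definition framed_schedule :: "'l set \<Rightarrow> ('l \<Rightarrow> 'l set set) \<Rightarrow> ('l \<Rightarrow> 'l \<Rightarrow> int) \<Rightarrow> int \<Rightarrow> ('l \<Rightarrow> int \<Rightarrow> bool) \<Rightarrow> bool" where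
  "framed_schedule L I D TF S \<longleftrightarrow>
     TF \<ge> character L I D + 1 \<and>
     (\<forall>l\<in>L. \<forall>t<0. \<not> S l t) \<and>
     (\<forall>k::int\<ge>0. \<forall>l\<in>L.
        (\<forall>i\<in>{TF - character L I D ..< TF}. \<not> S l (k * TF + i)) \<and>
        (\<forall>i\<in>{0 ..< TF - character L I D}. \<forall>j\<in>{0 ..< TF - character L I D}.
            S l (k * TF + i) = S l (k * TF + j)))"

definition active :: "int \<Rightarrow> int \<Rightarrow> ('l \<Rightarrow> int \<Rightarrow> bool) \<Rightarrow> 'l \<Rightarrow> int \<Rightarrow> bool" where
  "active Dstar TF S l k \<longleftrightarrow> (\<forall>i\<in>{0 ..< TF - Dstar}. S l (k * TF + i))"

end

theory Submission
  imports Defs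
begin

text \<open>Write \<open>c\<close> for the character. A collision compares slots at
  most \<open>c\<close> apart; since frames are separated by \<open>c\<close> idle slots, a collision at an active slot can
  only involve links active in the same frame. Conversely, if all of \<open>\<phi>\<close> is active in the frame
  of \<open>l\<close>, then slot \<open>c\<close> of that frame collides, because \<open>TF \<ge> 3c + 1\<close> keeps every shifted slot
  \<open>c + D l l'\<close> inside the active window \<open>[0, TF - c)\<close>.\<close>

lemma finite_delays:
  assumes "network L I D"
  shows "finite {\<bar>D l l'\<bar> | l \<phi> l'. l \<in> L \<and> \<phi> \<in> I l \<and> l' \<in> \<phi>}"
proof -
  have "{\<bar>D l l'\<bar> | l \<phi> l'. l \<in> L \<and> \<phi> \<in> I l \<and> l' \<in> \<phi>} \<subseteq> (\<lambda>(l, l'). \<bar>D l l'\<bar>) ` (L \<times> L)"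
    using assms unfolding network_def by fastforce
  moreover have "finite L" using assms unfolding network_def by simp
  ultimately show ?thesis by (simp add: finite_subset)
qed

lemma character_nonneg:
  assumes "network L I D"
  shows "0 \<le> character L I D"
  unfolding character_def using finite_delays[OF assms] by (simp add: Max_ge)

lemma abs_delay_le_character:
  assumes "network L I D" "l \<in> L" "\<phi> \<in> I l" "l' \<in> \<phi>"
  shows "\<bar>D l l'\<bar> \<le> character L I D"
  unfolding character_def using finite_delays[OF assms(1)] assms(2-4) by (intro Max_ge) blast+

lemma framed_schedule_frame_length_pos:
  assumes "network L I D" "framed_schedule L I D TF S"
  shows "0 < TF"
  using character_nonneg[OF assms(1)] assms(2) unfolding framed_schedule_def by linarith

lemma framed_schedule_iff_active:
  assumes "network L I D" "framed_schedule L I D TF S" "l \<in> L"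
  shows "S l t \<longleftrightarrow> 0 \<le> t \<and> t mod TF < TF - character L I D \<and>
    active (character L I D) TF S l (t div TF)"
proof -
  define c where "c = character L I D"
  define k where "k = t div TF"
  define i where "i = t mod TF"
  have TF: "0 < TF" using framed_schedule_frame_length_pos[OF assms(1,2)] .
  have t: "t = k * TF + i" unfolding k_def i_def by simp
  have i: "0 \<le> i" "i < TF" unfolding i_def using TF by simp_all
  note fs = assms(2)[unfolded framed_schedule_def, folded c_def]
  have "S l t \<longleftrightarrow> 0 \<le> t \<and> i < TF - c \<and> active c TF S l k"
  proof (cases "0 \<le> t")
    case False
    moreover have "\<forall>l\<in>L. \<forall>t<0. \<not> S l t" using fs by blast
    ultimately show ?thesis using assms(3) by simp
  next
    case True
    then have k: "0 \<le> k" unfolding k_def using TF by (simp add: pos_imp_zdiv_nonneg_iff)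
    show ?thesis
    proof (cases "i < TF - c")
      case False
      then show ?thesis using fs k assms(3) i t by auto
    next
      case True
      have "S l (k * TF + i) \<longleftrightarrow> (\<forall>j\<in>{0..<TF - c}. S l (k * TF + j))"
        using fs k assms(3) i True by (metis atLeastLessThan_iff)
      then show ?thesis using True \<open>0 \<le> t\<close> t unfolding active_def by simp
    qed
  qed
  then show ?thesis unfolding c_def k_def i_def .
qed

lemma same_frame_if_close:
  fixes TF c t t' :: int
  assumes "0 < TF" "t mod TF < TF - c" "t' mod TF < TF - c" "\<bar>t' - t\<bar> \<le> c"
  shows "t' div TF = t div TF"
proof -
  have t: "t = TF * (t div TF) + t mod TF" and t': "t' = TF * (t' div TF) + t' mod TF"
    by simp_all
  have "0 \<le> t mod TF" "0 \<le> t' mod TF" using assms(1) by simp_all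
  have "\<not> t div TF < t' div TF"
  proof
    assume "t div TF < t' div TF"
    then have "TF + TF * (t div TF) \<le> TF * (t' div TF)"
      using mult_left_mono[of "t div TF + 1" "t' div TF" TF] assms(1) by (simp add: algebra_simps)
    then show False using assms t t' \<open>0 \<le> t' mod TF\<close> by linarith
  qed
  moreover have "\<not> t' div TF < t div TF"
  proof
    assume "t' div TF < t div TF"
    then have "TF + TF * (t' div TF) \<le> TF * (t div TF)"
      using mult_left_mono[of "t' div TF + 1" "t div TF" TF] assms(1) by (simp add: algebra_simps)
    then show False using assms t t' \<open>0 \<le> t mod TF\<close> by linarith
  qed
  ultimately show ?thesis by simp
qed

lemma collision_within_active_frame:
  assumes "network L I D" "framed_schedule L I D TF S"
    and "l \<in> L" "S l t" "\<phi> \<in> I l" "\<forall>l'\<in>\<phi>. S l' (t + D l l')"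
  shows "0 \<le> t div TF \<and> active (character L I D) TF S l (t div TF) \<and>
    (\<forall>l'\<in>\<phi>. active (character L I D) TF S l' (t div TF))"
proof -
  have TF: "0 < TF" using framed_schedule_frame_length_pos[OF assms(1,2)] .
  have t: "0 \<le> t" "t mod TF < TF - character L I D" "active (character L I D) TF S l (t div TF)"
    using framed_schedule_iff_active[OF assms(1-3)] assms(4) by simp_all
  have "active (character L I D) TF S l' (t div TF)" if l': "l' \<in> \<phi>" for l'
  proof -
    have "l' \<in> L" using assms(1,3,5) l' unfolding network_def by blast
    then have t': "(t + D l l') mod TF < TF - character L I D"
      "active (character L I D) TF S l' ((t + D l l') div TF)"
      using framed_schedule_iff_active[OF assms(1,2)] assms(6) l' by blast+
    have "\<bar>(t + D l l') - t\<bar> \<le> character L I D"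
      using abs_delay_le_character[OF assms(1,3,5) l'] by simp
    then have "(t + D l l') div TF = t div TF" using same_frame_if_close TF t(2) t'(1) by blast
    then show ?thesis using t'(2) by simp
  qed
  moreover have "0 \<le> t div TF" using t(1) TF by (simp add: pos_imp_zdiv_nonneg_iff)
  ultimately show ?thesis using t(3) by blast
qed

lemma active_frame_collision:
  assumes "network L I D" "framed_schedule L I D TF S" "3 * character L I D + 1 \<le> TF"
    and "l \<in> L" "\<phi> \<in> I l" "active (character L I D) TF S l k"
    and "\<forall>l'\<in>\<phi>. active (character L I D) TF S l' k"
  defines "t \<equiv> k * TF + character L I D"
  shows "S l t \<and> has_collision I D S l t"
proof -
  define c where "c = character L I D"
  have c: "0 \<le> c" unfolding c_def using character_nonneg[OF assms(1)] .
  have "S l t" using assms(3,6) c unfolding active_def t_def c_def[symmetric] by simp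
  moreover have "S l' (t + D l l')" if l': "l' \<in> \<phi>" for l'
  proof -
    have "\<bar>D l l'\<bar> \<le> c" unfolding c_def using abs_delay_le_character[OF assms(1,4,5) l'] .
    then have "c + D l l' \<in> {0..<TF - c}" using assms(3) unfolding c_def[symmetric] by auto
    then show ?thesis using assms(7) l' unfolding active_def t_def c_def[symmetric]
      by (metis add.assoc)
  qed
  ultimately show ?thesis using assms(5) unfolding has_collision_def by blast
qed

theorem lemma2:
  fixes L :: "'l set" and I :: "'l \<Rightarrow> 'l set set" and D :: "'l \<Rightarrow> 'l \<Rightarrow> int"
    and TF :: int and S :: "'l \<Rightarrow> int \<Rightarrow> bool"
  assumes "network L I D"
    and "framed_schedule L I D TF S"
    and "TF \<ge> 3 * character L I D + 1"
  shows "collision_free L I D S \<longleftrightarrow>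
    (\<forall>k::int\<ge>0. \<forall>l\<in>L. active (character L I D) TF S l k \<longrightarrow>
       (\<forall>\<phi>\<in>I l. \<exists>l'\<in>\<phi>. \<not> active (character L I D) TF S l' k))"
proof
  assume "collision_free L I D S"
  then show "\<forall>k::int\<ge>0. \<forall>l\<in>L. active (character L I D) TF S l k \<longrightarrow>
       (\<forall>\<phi>\<in>I l. \<exists>l'\<in>\<phi>. \<not> active (character L I D) TF S l' k)"
    using active_frame_collision[OF assms] unfolding collision_free_def by metis
next
  assume "\<forall>k::int\<ge>0. \<forall>l\<in>L. active (character L I D) TF S l k \<longrightarrow>
       (\<forall>\<phi>\<in>I l. \<exists>l'\<in>\<phi>. \<not> active (character L I D) TF S l' k)"
  then show "collision_free L I D S"
    using collision_within_active_frame[OF assms(1,2)]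
    unfolding collision_free_def has_collision_def by metis
qed

end
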